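(* Let $\nu_0=0$, $\gamma=0$ and $u>0$, and let $y(t;y_0)$ solve $\dot y=-sy(1-y)+u(1-y)$, $y(0)=y_0\in[0,1]$. Then $$g_r(y_0)=y_0\exp\Big(-s\int_0^r(1-y(\xi;y_0))\,d\xi\Big),\qquad y_0\in[0,1],$$ and in particular $$g_r(y_0)=\begin{cases}y_0\,\dfrac{u-s\,y(r;y_0)}{u-sy_0}, & y_0\in[0,1)\setminus\{u/s\},\\[6pt] y_0\,e^{-rs(1-y_0)}, & y_0\in\{u/s,1\}.\end{cases}$$ Furthermore $g_\infty(y_0)=\lim_{r\to\infty}g_r(y_0)$ exists and satisfies: (i) if $s=0$, then $g_\infty(y_0)=y_0$ for all $y_0\in[0,1]$; (ii) if $u\le s$, then $g_\infty(y_0)=0$ for $y_0\in[0,1)$ and $g_\infty(1)=1$; (iii) if $u>s$, then $g_\infty(y_0)=y_0\frac{u-s}{u-sy_0}$.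
   Context: Embedded ASG process $(a_r)_{r\ge0}$ (with $\gamma=0$, $\nu_0=0$): a random finite rooted tree started from a single unmarked root. Independently at each leaf $\ell$: at rate $s$, two children (left, right) are attached to $\ell$; at rate $u$, one child is attached and $\ell$ is marked $\times$. Typing: given types $c_\ell\in\{0,1\}$ at the leaves, types propagate to the root. A $\times$-marked vertex has type 1, and an outdegree-2 vertex has type 1 iff both children have type 1. Ancestral leaf $\lambda_v$: a leaf is its own ancestral leaf. For an outdegree-2 vertex, $\lambda_v$ is $\lambda$ of the right child if the right child has type 0, and $\lambda$ of the left child otherwise. For an outdegree-1 vertex, $\lambda_v$ is $\lambda$ of its child. $g_r(y_0)$ is the probability that the ancestral leaf of the root of $a_r$ has type 1, when the leaves are typed independently, each with type 1 with probability $y_0$. *)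

theory Defs
  imports "HOL-Probability.Probability"
begin

text \<open>Finite rooted trees of the embedded ASG: a leaf, a vertex marked by a
  mutation cross with one child, or a branching vertex with (left, right) children.\<close>
datatype asg_tree = Leaf | Mark asg_tree | Bin asg_tree asg_tree

text \<open>Law of the embedded ASG at time r, started from a single unmarked leaf.
  First-jump decomposition: the root leaf waits an Exp(s+u) time; at rate s it
  branches into two independent copies, at rate u it is marked and gets one child;
  the resulting subtrees evolve independently for the remaining time.\<close>
primrec asg_prob :: "real \<Rightarrow> real \<Rightarrow> asg_tree \<Rightarrow> real \<Rightarrow> real" where
  "asg_prob s u Leaf r = exp (- (s + u) * r)"
| "asg_prob s u (Mark t) r =
     integral {0..r} (\<lambda>\<tau>. u * exp (- (s + u) * \<tau>) * asg_prob s u t (r - \<tau>))"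
| "asg_prob s u (Bin l t) r =
     integral {0..r} (\<lambda>\<tau>. s * exp (- (s + u) * \<tau>) * asg_prob s u l (r - \<tau>) * asg_prob s u t (r - \<tau>))"

text \<open>Leaves addressed by paths (False = left / only child, True = right child).\<close>
primrec leaves :: "asg_tree \<Rightarrow> bool list set" where
  "leaves Leaf = {[]}"
| "leaves (Mark t) = Cons False ` leaves t"
| "leaves (Bin l r) = Cons False ` leaves l \<union> Cons True ` leaves r"

text \<open>Type of the root, given leaf types c (True = type 1).\<close>
primrec vtype :: "asg_tree \<Rightarrow> (bool list \<Rightarrow> bool) \<Rightarrow> bool" where
  "vtype Leaf c = c []"
| "vtype (Mark t) c = True"
| "vtype (Bin l r) c = (vtype l (c \<circ> Cons False) \<and> vtype r (c \<circ> Cons True))"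

primrec anc :: "asg_tree \<Rightarrow> (bool list \<Rightarrow> bool) \<Rightarrow> bool list" where
  "anc Leaf c = []"
| "anc (Mark t) c = False # anc t (c \<circ> Cons False)"
| "anc (Bin l r) c = (if \<not> vtype r (c \<circ> Cons True) then True # anc r (c \<circ> Cons True)
                      else False # anc l (c \<circ> Cons False))"

definition anc_type_prob :: "real \<Rightarrow> asg_tree \<Rightarrow> real" where
  "anc_type_prob y0 t =
     measure_pmf.prob (Pi_pmf (leaves t) False (\<lambda>_. bernoulli_pmf y0)) {c. c (anc t c)}"

definition g :: "real \<Rightarrow> real \<Rightarrow> real \<Rightarrow> real \<Rightarrow> real" where
  "g s u r y0 = (\<Sum>\<^sub>\<infinity>t. asg_prob s u t r * anc_type_prob y0 t)"

end

(*
  Write P_t(r) = asg_prob s u t r. For weights w on trees with w (Mark t) = w1 t and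
  w (Bin l t) = w2 l * w3 t, the first-jump decomposition of P_t turns W(r) = sum_t P_t(r) w(t) into

    W(r) = exp(-(s + u) r) (w(Leaf) + int_0^r exp((s + u) x) (u W1(x) + s W2(x) W3(x)) dx),

  i.e. W' = -(s + u) W + u W1 + s W2 W3; sum and integral are interchanged by monotone convergence
  along the trees of bounded height. The probability that the root has type 1 and the probability
  that the ancestral leaf has type 1 are such weights (a type-0 right subtree carries the ancestral
  leaf). Hence the total mass M solves M' = s M (M - 1), so M = 1; the root-type sum B solves the
  Riccati equation y' = -s y (1 - y) + u (1 - y), so B = y by uniqueness; and A = g solves
  A' = -s (1 - B) A, so g = y0 exp(-s int_0^r (1 - y)). Along the Riccati flow u - s y and 1 - y
  solve linear equations; they give the closed forms and

    exp(s int_0^r (1 - y)) = 1 + s (1 - y0) int_0^r exp((s - u) x) dx,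

  from which the limits as r tends to infinity are read off.
*)

theory Submission
  imports Defs
begin

section \<open>Types of the root and of the ancestral leaf\<close>

lemma finite_leaves: "finite (leaves t)"
  by (induction t) auto

lemma measure_pair_pmf_Times:
  "measure_pmf.prob (pair_pmf M N) (A \<times> B) = measure_pmf.prob M A * measure_pmf.prob N B"
proof -
  have "measure_pmf.prob (pair_pmf M N) (A \<times> B) = measure_pmf.prob (pair_pmf M N) ((A \<times> B) \<inter> set_pmf (pair_pmf M N))"
    by (rule measure_Int_set_pmf[symmetric])
  also have "(A \<times> B) \<inter> set_pmf (pair_pmf M N) = (A \<inter> set_pmf M) \<times> (B \<inter> set_pmf N)"
    by auto
  also have "measure_pmf.prob (pair_pmf M N) \<dots> = measure_pmf.prob M (A \<inter> set_pmf M) * measure_pmf.prob N (B \<inter> set_pmf N)"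
    by (rule measure_pmf_prob_product) auto
  finally show ?thesis by (simp add: measure_Int_set_pmf)
qed

lemma map_Pi_pmf_comp_Cons:
  assumes "finite A"
  shows "map_pmf (\<lambda>c. c \<circ> Cons b) (Pi_pmf (Cons b ` A) d (\<lambda>_. p)) = Pi_pmf A d (\<lambda>_. p)"
  by (rule Pi_pmf_bij_betw[symmetric]) (auto simp: assms bij_betw_def inj_on_def)

lemma map_Pi_pmf_split_Cons:
  assumes "finite A" "finite B"
  shows "map_pmf (\<lambda>c. (c \<circ> Cons False, c \<circ> Cons True)) (Pi_pmf (Cons False ` A \<union> Cons True ` B) d (\<lambda>_. p))
         = pair_pmf (Pi_pmf A d (\<lambda>_. p)) (Pi_pmf B d (\<lambda>_. p))"
proof -
  let ?A = "Cons False ` A" and ?B = "Cons True ` B"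
  let ?split = "\<lambda>c. (c \<circ> Cons False, c \<circ> Cons True)"
  let ?glue = "\<lambda>(f, g) x. if x \<in> ?A then f x else g x"
  let ?Q = "pair_pmf (Pi_pmf ?A d (\<lambda>_. p)) (Pi_pmf ?B d (\<lambda>_. p))"
  have "Pi_pmf (?A \<union> ?B) d (\<lambda>_. p) = map_pmf ?glue ?Q"
    by (rule Pi_pmf_union) (use assms in auto)
  then have "map_pmf ?split (Pi_pmf (?A \<union> ?B) d (\<lambda>_. p)) = map_pmf (?split \<circ> ?glue) ?Q"
    by (simp add: pmf.map_comp)
  also have "\<dots> = map_pmf (\<lambda>(f, g). (f \<circ> Cons False, g \<circ> Cons True)) ?Q"
  proof (rule pmf.map_cong[OF refl])
    fix z assume z: "z \<in> set_pmf ?Q"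
    obtain f g where fg: "z = (f, g)" by (cases z)
    have "\<forall>x. x \<notin> ?A \<longrightarrow> f x = d" "\<forall>x. x \<notin> ?B \<longrightarrow> g x = d"
      using z set_Pi_pmf_subset[of ?A d "\<lambda>_. p"] set_Pi_pmf_subset[of ?B d "\<lambda>_. p"] assms
      by (auto simp: fg)
    then have "(\<lambda>x. if x \<in> ?A then f x else g x) \<circ> Cons False = f \<circ> Cons False"
      by (auto simp: fun_eq_iff)
    moreover have "(\<lambda>x. if x \<in> ?A then f x else g x) \<circ> Cons True = g \<circ> Cons True"
      by (auto simp: fun_eq_iff)
    ultimately show "(?split \<circ> ?glue) z = (\<lambda>(f, g). (f \<circ> Cons False, g \<circ> Cons True)) z"
      by (simp add: fg)
  qed
  also have "\<dots> = pair_pmf (Pi_pmf A d (\<lambda>_. p)) (Pi_pmf B d (\<lambda>_. p))"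
    by (simp add: map_pair map_Pi_pmf_comp_Cons assms)
  finally show ?thesis .
qed

abbreviation leaf_types :: "real \<Rightarrow> asg_tree \<Rightarrow> (bool list \<Rightarrow> bool) pmf" where
  "leaf_types y0 t \<equiv> Pi_pmf (leaves t) False (\<lambda>_. bernoulli_pmf y0)"

definition root_type_prob :: "real \<Rightarrow> asg_tree \<Rightarrow> real" where
  "root_type_prob y0 t = measure_pmf.prob (leaf_types y0 t) {c. vtype t c}"

lemma prob_leaf_types_Leaf:
  assumes "y0 \<in> {0..1}"
  shows "measure_pmf.prob (leaf_types y0 Leaf) {c. c []} = y0"
proof -
  have "measure_pmf.prob (leaf_types y0 Leaf) {c. c []}
      = measure_pmf.prob (map_pmf (\<lambda>c. c []) (leaf_types y0 Leaf)) {True}"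
    by (simp add: vimage_def)
  also have "map_pmf (\<lambda>c. c []) (leaf_types y0 Leaf) = bernoulli_pmf y0"
    by (simp add: Pi_pmf_component)
  finally show ?thesis using assms by (simp add: measure_pmf_single)
qed

lemma prob_leaf_types_Mark:
  "measure_pmf.prob (leaf_types y0 (Mark t)) ((\<lambda>c. c \<circ> Cons False) -` E) = measure_pmf.prob (leaf_types y0 t) E"
  by (simp add: map_Pi_pmf_comp_Cons finite_leaves flip: measure_map_pmf)

lemma prob_leaf_types_Bin:
  "measure_pmf.prob (leaf_types y0 (Bin l t)) ((\<lambda>c. (c \<circ> Cons False, c \<circ> Cons True)) -` (E \<times> F))
     = measure_pmf.prob (leaf_types y0 l) E * measure_pmf.prob (leaf_types y0 t) F"
  by (simp add: map_Pi_pmf_split_Cons finite_leaves measure_pair_pmf_Times flip: measure_map_pmf)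

lemma root_type_prob_Leaf: "y0 \<in> {0..1} \<Longrightarrow> root_type_prob y0 Leaf = y0"
  unfolding root_type_prob_def vtype.simps by (rule prob_leaf_types_Leaf)

lemma root_type_prob_Mark: "root_type_prob y0 (Mark t) = 1"
  by (simp add: root_type_prob_def)

lemma root_type_prob_Bin: "root_type_prob y0 (Bin l t) = root_type_prob y0 l * root_type_prob y0 t"
  using prob_leaf_types_Bin[where E="{c. vtype l c}" and F="{c. vtype t c}"]
  by (simp add: root_type_prob_def vimage_def)

lemma anc_type_prob_Leaf: "y0 \<in> {0..1} \<Longrightarrow> anc_type_prob y0 Leaf = y0"
  unfolding anc_type_prob_def anc.simps by (rule prob_leaf_types_Leaf)

lemma anc_type_prob_Mark: "anc_type_prob y0 (Mark t) = anc_type_prob y0 t"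
  using prob_leaf_types_Mark[where E="{c. c (anc t c)}"]
  by (simp add: anc_type_prob_def vimage_def)

lemma anc_of_type0: "\<not> vtype t c \<Longrightarrow> \<not> c (anc t c)"
  by (induction t arbitrary: c) (auto simp: o_def split: if_splits)

lemma anc_type_prob_Bin: "anc_type_prob y0 (Bin l t) = anc_type_prob y0 l * root_type_prob y0 t"
proof -
  have "{c. c (anc (Bin l t) c)}
      = (\<lambda>c. (c \<circ> Cons False, c \<circ> Cons True)) -` ({c. c (anc l c)} \<times> {c. vtype t c})"
    using anc_of_type0[of t] by (auto simp: comp_def)
  then show ?thesis
    using prob_leaf_types_Bin[where E="{c. c (anc l c)}" and F="{c. vtype t c}"]
    by (simp add: anc_type_prob_def root_type_prob_def)
qed

lemma root_type_prob_bounds: "0 \<le> root_type_prob y0 t" "root_type_prob y0 t \<le> 1"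
  by (simp_all add: root_type_prob_def)

lemma anc_type_prob_bounds: "0 \<le> anc_type_prob y0 t" "anc_type_prob y0 t \<le> 1"
  by (simp_all add: anc_type_prob_def)

section \<open>Integral equations on the half-line\<close>

lemma at_within_atLeast_eq:
  fixes x :: real
  assumes "a \<le> x" "x < b"
  shows "at x within {a..} = at x within {a..b}"
  by (rule at_within_nhd[where S="{..<b}"]) (use assms in auto)

lemma has_real_derivative_integral_atLeast:
  assumes "continuous_on {0..} f" "0 \<le> x"
  shows "((\<lambda>r. integral {0..r} f) has_real_derivative f x) (at x within {0..})"
proof -
  have "continuous_on {0..x+1} f"
    by (rule continuous_on_subset[OF assms(1)]) auto
  then show ?thesis
    using integral_has_real_derivative[of 0 "x+1" f x] at_within_atLeast_eq[of 0 x "x+1"] assms(2)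
    by simp
qed

lemma linear_ode_solution:
  fixes w k :: "real \<Rightarrow> real"
  assumes k: "continuous_on {0..} k"
    and w: "\<And>t. 0 \<le> t \<Longrightarrow> (w has_real_derivative k t * w t) (at t within {0..})"
    and "0 \<le> r"
  shows "w r = w 0 * exp (integral {0..r} k)"
proof -
  define h where "h t = w t * exp (- integral {0..t} k)" for t
  have "(h has_real_derivative 0) (at t within {0..})" if "t \<in> {0..}" for t
    unfolding h_def using that
    by (auto intro!: derivative_eq_intros w has_real_derivative_integral_atLeast[OF k]
        simp: algebra_simps)
  then obtain C where "\<forall>t\<in>{0..}. h t = C"
    using has_field_derivative_zero_constant[of "{0..}" h] by auto
  then have "h r = h 0"
    using \<open>0 \<le> r\<close> by auto
  then show ?thesis
    by (simp add: h_def exp_minus field_simps)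
qed

lemma integral_reflect_interval:
  fixes f :: "real \<Rightarrow> real"
  assumes "f integrable_on {0..r}"
  shows "integral {0..r} (\<lambda>\<tau>. f (r - \<tau>)) = integral {0..r} f"
proof -
  have "(f has_integral integral {0..r} f) (cbox 0 r)"
    using assms by (simp add: has_integral_integral)
  from has_integral_affinity[OF this, of "-1" r]
  have "((\<lambda>\<tau>. f (r - \<tau>)) has_integral integral {0..r} f) ((\<lambda>\<tau>. r - \<tau>) ` {0..r})"
    by simp
  moreover have "(\<lambda>\<tau>. r - \<tau>) ` {0..r} = {0..r}"
    by (auto simp: image_iff intro!: bexI[where x="r - _"])
  ultimately show ?thesis
    by (simp add: integral_unique)
qed

lemma integral_exp_convolution:
  fixes \<phi> :: "real \<Rightarrow> real"
  assumes "continuous_on {0..} \<phi>" "0 \<le> r"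
  shows "integral {0..r} (\<lambda>\<tau>. K * exp (- c * \<tau>) * \<phi> (r - \<tau>))
       = K * exp (- c * r) * integral {0..r} (\<lambda>\<sigma>. exp (c * \<sigma>) * \<phi> \<sigma>)"
proof -
  have "continuous_on {0..r} \<phi>"
    by (rule continuous_on_subset[OF assms(1)]) auto
  then have "(\<lambda>\<sigma>. exp (c * \<sigma>) * \<phi> \<sigma>) integrable_on {0..r}"
    by (intro integrable_continuous_real continuous_intros)
  then have reflected: "integral {0..r} (\<lambda>\<tau>. exp (c * (r - \<tau>)) * \<phi> (r - \<tau>)) = integral {0..r} (\<lambda>\<sigma>. exp (c * \<sigma>) * \<phi> \<sigma>)"
    by (rule integral_reflect_interval)
  have kernel: "(\<lambda>\<tau>. K * exp (- c * \<tau>) * \<phi> (r - \<tau>)) = (\<lambda>\<tau>. K * exp (- c * r) * (exp (c * (r - \<tau>)) * \<phi> (r - \<tau>)))"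
  proof
    fix \<tau>
    have "exp (- c * \<tau>) = exp (- c * r) * exp (c * (r - \<tau>))"
      by (simp add: mult_exp_exp algebra_simps)
    then show "K * exp (- c * \<tau>) * \<phi> (r - \<tau>) = K * exp (- c * r) * (exp (c * (r - \<tau>)) * \<phi> (r - \<tau>))"
      by (simp only: mult_ac)
  qed
  show ?thesis
    by (simp only: kernel integral_mult_right reflected)
qed

lemma monotone_convergence_integral_equation:
  fixes c x0 r :: real and F :: "nat \<Rightarrow> real \<Rightarrow> real"
  assumes X: "\<And>n. X (Suc n) = exp (- c * r) * (x0 + integral {0..r} (F n))"
    and F: "\<And>n. F n integrable_on {0..r}"
    and mono: "\<And>n \<sigma>. \<sigma> \<in> {0..r} \<Longrightarrow> F n \<sigma> \<le> F (Suc n) \<sigma>"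
    and lim_F: "\<And>\<sigma>. \<sigma> \<in> {0..r} \<Longrightarrow> (\<lambda>n. F n \<sigma>) \<longlonglongrightarrow> G \<sigma>"
    and lim_X: "X \<longlonglongrightarrow> L"
  shows "G integrable_on {0..r}" and "L = exp (- c * r) * (x0 + integral {0..r} G)"
proof -
  have integral_F: "integral {0..r} (F n) = exp (c * r) * X (Suc n) - x0" for n
    using X[of n] by (simp add: exp_minus field_simps)
  have "(\<lambda>n. exp (c * r) * X (Suc n) - x0) \<longlonglongrightarrow> exp (c * r) * L - x0"
    by (intro tendsto_intros LIMSEQ_Suc lim_X)
  then have "bounded (range (\<lambda>n. integral {0..r} (F n)))"
    unfolding integral_F by (rule convergent_imp_bounded)
  from monotone_convergence_increasing[OF F mono lim_F this]
  have "G integrable_on {0..r}" and lim: "(\<lambda>n. integral {0..r} (F n)) \<longlonglongrightarrow> integral {0..r} G"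
    by auto
  then show "G integrable_on {0..r}"
    by blast
  have "(\<lambda>n. X (Suc n)) \<longlonglongrightarrow> exp (- c * r) * (x0 + integral {0..r} G)"
    unfolding X by (intro tendsto_intros lim)
  then show "L = exp (- c * r) * (x0 + integral {0..r} G)"
    using LIMSEQ_unique LIMSEQ_Suc[OF lim_X] by blast
qed

lemma continuous_on_integral_equation:
  fixes X G :: "real \<Rightarrow> real"
  assumes G: "\<And>r. 0 \<le> r \<Longrightarrow> G integrable_on {0..r}"
    and X: "\<And>r. 0 \<le> r \<Longrightarrow> X r = exp (- c * r) * (x0 + integral {0..r} G)"
  shows "continuous_on {0..} X"
  unfolding continuous_on_eq_continuous_within
proof
  fix x :: real assume "x \<in> {0..}"
  then have x: "0 \<le> x" by simp
  have "continuous_on {0..x+1} (\<lambda>r. integral {0..r} G)"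
    by (rule indefinite_integral_continuous_1) (use G x in auto)
  then have "continuous_on {0..x+1} (\<lambda>r. exp (- c * r) * (x0 + integral {0..r} G))"
    by (intro continuous_intros)
  then have "continuous_on {0..x+1} X"
    by (rule continuous_on_cong[THEN iffD1, rotated 2]) (simp_all add: X)
  then show "continuous (at x within {0..}) X"
    using x by (simp add: continuous_on_eq_continuous_within at_within_atLeast_eq[of 0 x "x+1"])
qed

lemma has_real_derivative_integral_equation:
  fixes X H :: "real \<Rightarrow> real"
  assumes X: "\<And>r. 0 \<le> r \<Longrightarrow> X r = exp (- c * r) * (x0 + integral {0..r} (\<lambda>\<sigma>. exp (c * \<sigma>) * H \<sigma>))"
    and H: "continuous_on {0..} H" and "0 \<le> r"
  shows "(X has_real_derivative - c * X r + H r) (at r within {0..})"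
proof -
  have "continuous_on {0..} (\<lambda>\<sigma>. exp (c * \<sigma>) * H \<sigma>)"
    by (intro continuous_intros H)
  note integral = has_real_derivative_integral_atLeast[OF this \<open>0 \<le> r\<close>]
  have "((\<lambda>r. exp (- c * r)) has_real_derivative - c * exp (- c * r)) (at r within {0..})"
    by (auto intro!: derivative_eq_intros)
  from DERIV_mult[OF this DERIV_add[OF DERIV_const[of x0] integral]]
  have "((\<lambda>r. exp (- c * r) * (x0 + integral {0..r} (\<lambda>\<sigma>. exp (c * \<sigma>) * H \<sigma>))) has_real_derivative
      - c * (exp (- c * r) * (x0 + integral {0..r} (\<lambda>\<sigma>. exp (c * \<sigma>) * H \<sigma>)))
      + exp (- c * r) * exp (c * r) * H r) (at r within {0..})"
    by (simp add: algebra_simps)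
  then have "((\<lambda>r. exp (- c * r) * (x0 + integral {0..r} (\<lambda>\<sigma>. exp (c * \<sigma>) * H \<sigma>)))
      has_real_derivative - c * X r + H r) (at r within {0..})"
    by (simp add: X[OF \<open>0 \<le> r\<close>] mult_exp_exp)
  then show ?thesis
    by (rule has_field_derivative_transform_within[where d=1]) (use \<open>0 \<le> r\<close> X in auto)
qed

lemma integral_exp_derivative:
  fixes c r :: real
  assumes "0 \<le> r"
  shows "integral {0..r} (\<lambda>\<sigma>. c * exp (c * \<sigma>)) = exp (c * r) - 1"
proof -
  have "((\<lambda>\<sigma>. c * exp (c * \<sigma>)) has_integral exp (c * r) - exp (c * 0)) {0..r}"
    using assms
    by (intro fundamental_theorem_of_calculus)
       (auto intro!: derivative_eq_intros simp flip: has_real_derivative_iff_has_vector_derivative)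
  then have "((\<lambda>\<sigma>. c * exp (c * \<sigma>)) has_integral exp (c * r) - 1) {0..r}"
    by simp
  then show ?thesis
    by (rule integral_unique)
qed

lemma integral_exp_ge:
  fixes a r :: real
  assumes "0 \<le> a" "0 \<le> r"
  shows "r \<le> integral {0..r} (\<lambda>\<sigma>. exp (a * \<sigma>))"
proof -
  have "integral {0..r} (\<lambda>\<sigma>. 1) \<le> integral {0..r} (\<lambda>\<sigma>. exp (a * \<sigma>))"
    using assms by (intro integral_le integrable_continuous_real continuous_intros) auto
  then show ?thesis
    using assms by simp
qed

lemma integral_exp_tendsto:
  fixes a :: real
  assumes "a < 0"
  shows "((\<lambda>r. integral {0..r} (\<lambda>\<sigma>. exp (a * \<sigma>))) \<longlongrightarrow> - 1 / a) at_top"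
proof -
  have "\<forall>\<^sub>F r in at_top. (exp (a * r) - 1) / a = integral {0..r} (\<lambda>\<sigma>. exp (a * \<sigma>))"
    using eventually_ge_at_top[of 0]
    by eventually_elim (use assms in \<open>simp add: integral_exp_derivative[symmetric]\<close>)
  moreover have "((\<lambda>r. (exp (a * r) - 1) / a) \<longlongrightarrow> (0 - 1) / a) at_top"
    using assms
    by (intro tendsto_intros filterlim_compose[OF exp_at_bot] filterlim_tendsto_neg_mult_at_bot[OF tendsto_const _ filterlim_ident])
       auto
  ultimately show ?thesis
    using tendsto_cong by fastforce
qed

section \<open>The Riccati equation\<close>

definition asg_ode_solution :: "real \<Rightarrow> real \<Rightarrow> (real \<Rightarrow> real) \<Rightarrow> bool" where
  "asg_ode_solution s u y \<longleftrightarrow>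
     (\<forall>t\<ge>0. (y has_real_derivative (- s * y t * (1 - y t) + u * (1 - y t))) (at t within {0..}))"

lemma asg_ode_solutionD:
  "asg_ode_solution s u y \<Longrightarrow> 0 \<le> t \<Longrightarrow>
     (y has_real_derivative (- s * y t * (1 - y t) + u * (1 - y t))) (at t within {0..})"
  unfolding asg_ode_solution_def by blast

lemma asg_ode_solution_continuous: "asg_ode_solution s u y \<Longrightarrow> continuous_on {0..} y"
  by (rule DERIV_continuous_on) (auto dest: asg_ode_solutionD)

lemma asg_ode_solution_unique:
  assumes y: "asg_ode_solution s u y" and z: "asg_ode_solution s u z" and "y 0 = z 0" "0 \<le> r"
  shows "y r = z r"
proof -
  have "continuous_on {0..} (\<lambda>t. - (s + u) + s * (y t + z t))"
    by (intro continuous_intros asg_ode_solution_continuous[OF y] asg_ode_solution_continuous[OF z])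
  moreover have "((\<lambda>t. y t - z t) has_real_derivative (- (s + u) + s * (y t + z t)) * (y t - z t)) (at t within {0..})"
    if "0 \<le> t" for t
    by (rule DERIV_cong[OF DERIV_diff[OF asg_ode_solutionD[OF y that] asg_ode_solutionD[OF z that]]])
       (simp add: algebra_simps)
  ultimately show ?thesis
    using linear_ode_solution[of _ "\<lambda>t. y t - z t", OF _ _ \<open>0 \<le> r\<close>] \<open>y 0 = z 0\<close> by simp
qed

lemma asg_ode_u_minus_s_y:
  assumes y: "asg_ode_solution s u y" and "0 \<le> r"
  shows "u - s * y r = (u - s * y 0) * exp (- s * integral {0..r} (\<lambda>\<xi>. 1 - y \<xi>))"
proof -
  have "continuous_on {0..} (\<lambda>t. - s * (1 - y t))"
    by (intro continuous_intros asg_ode_solution_continuous[OF y])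
  moreover have "((\<lambda>t. u - s * y t) has_real_derivative - s * (1 - y t) * (u - s * y t)) (at t within {0..})"
    if "0 \<le> t" for t
    by (rule DERIV_cong[OF DERIV_diff[OF DERIV_const DERIV_cmult[OF asg_ode_solutionD[OF y that]]]])
       (simp add: algebra_simps)
  ultimately show ?thesis
    using linear_ode_solution[of _ "\<lambda>t. u - s * y t", OF _ _ \<open>0 \<le> r\<close>] by simp
qed

lemma asg_ode_one_minus_y:
  assumes y: "asg_ode_solution s u y" and "0 \<le> r"
  shows "1 - y r = (1 - y 0) * exp ((s - u) * r) * exp (- s * integral {0..r} (\<lambda>\<xi>. 1 - y \<xi>))"
proof -
  have "continuous_on {0..r} y"
    by (rule continuous_on_subset[OF asg_ode_solution_continuous[OF y]]) auto
  then have "integral {0..r} (\<lambda>t. (s - u) - s * (1 - y t)) = (s - u) * r - s * integral {0..r} (\<lambda>\<xi>. 1 - y \<xi>)"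
    using \<open>0 \<le> r\<close> by (subst integral_diff) (auto intro!: integrable_continuous_real continuous_intros)
  moreover have "continuous_on {0..} (\<lambda>t. (s - u) - s * (1 - y t))"
    by (intro continuous_intros asg_ode_solution_continuous[OF y])
  moreover have "((\<lambda>t. 1 - y t) has_real_derivative ((s - u) - s * (1 - y t)) * (1 - y t)) (at t within {0..})"
    if "0 \<le> t" for t
    by (rule DERIV_cong[OF DERIV_diff[OF DERIV_const asg_ode_solutionD[OF y that]]]) (simp add: algebra_simps)
  moreover have "exp ((s - u) * r - s * integral {0..r} (\<lambda>\<xi>. 1 - y \<xi>))
      = exp ((s - u) * r) * exp (- s * integral {0..r} (\<lambda>\<xi>. 1 - y \<xi>))"
    by (simp flip: exp_add)
  ultimately show ?thesis
    using linear_ode_solution[of _ "\<lambda>t. 1 - y t", OF _ _ \<open>0 \<le> r\<close>] by (simp only: mult.assoc)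
qed

lemma asg_ode_exp_integral:
  assumes y: "asg_ode_solution s u y" and "0 \<le> r"
  shows "exp (s * integral {0..r} (\<lambda>\<xi>. 1 - y \<xi>)) = 1 + s * (1 - y 0) * integral {0..r} (\<lambda>\<sigma>. exp ((s - u) * \<sigma>))"
proof -
  let ?F = "\<lambda>r. exp (s * integral {0..r} (\<lambda>\<xi>. 1 - y \<xi>))"
  have deriv: "(?F has_real_derivative s * (1 - y 0) * exp ((s - u) * t)) (at t within {0..})" if "0 \<le> t" for t
  proof -
    have "continuous_on {0..} (\<lambda>\<xi>. 1 - y \<xi>)"
      by (intro continuous_intros asg_ode_solution_continuous[OF y])
    note integral = has_real_derivative_integral_atLeast[OF this that]
    let ?I = "integral {0..t} (\<lambda>\<xi>. 1 - y \<xi>)"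
    have "?F t * (s * (1 - y t)) = s * (1 - y 0) * exp ((s - u) * t) * (exp (s * ?I) * exp (- s * ?I))"
      unfolding asg_ode_one_minus_y[OF y that] by (simp only: mult_ac)
    also have "exp (s * ?I) * exp (- s * ?I) = 1"
      by (simp add: exp_minus_inverse)
    finally have derivative: "?F t * (s * (1 - y t)) = s * (1 - y 0) * exp ((s - u) * t)"
      by simp
    have "(?F has_real_derivative ?F t * (s * (1 - y t))) (at t within {0..})"
      by (auto intro!: derivative_eq_intros integral)
    then show ?thesis
      unfolding derivative .
  qed
  then have "((\<lambda>\<sigma>. s * (1 - y 0) * exp ((s - u) * \<sigma>)) has_integral ?F r - ?F 0) {0..r}"
    using \<open>0 \<le> r\<close>
    by (intro fundamental_theorem_of_calculus)
       (auto simp flip: has_real_derivative_iff_has_vector_derivative intro!: has_field_derivative_subset[OF deriv])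
  then have "integral {0..r} (\<lambda>\<sigma>. s * (1 - y 0) * exp ((s - u) * \<sigma>)) = ?F r - ?F 0"
    by (rule integral_unique)
  then show ?thesis
    by simp
qed

section \<open>Trees of bounded height\<close>

fun asg_height :: "asg_tree \<Rightarrow> nat" where
  "asg_height Leaf = 0"
| "asg_height (Mark t) = Suc (asg_height t)"
| "asg_height (Bin l t) = Suc (max (asg_height l) (asg_height t))"

definition trees_up_to :: "nat \<Rightarrow> asg_tree set" where
  "trees_up_to n = {t. asg_height t \<le> n}"

lemma trees_up_to_0: "trees_up_to 0 = {Leaf}"
  unfolding trees_up_to_def by (auto elim: asg_height.elims)

lemma trees_up_to_Suc:
  "trees_up_to (Suc n) = insert Leaf (Mark ` trees_up_to n \<union> case_prod Bin ` (trees_up_to n \<times> trees_up_to n))"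
proof (rule set_eqI)
  fix t
  show "t \<in> trees_up_to (Suc n) \<longleftrightarrow> t \<in> insert Leaf (Mark ` trees_up_to n \<union> case_prod Bin ` (trees_up_to n \<times> trees_up_to n))"
    by (cases t) (auto simp: trees_up_to_def image_iff)
qed

lemma finite_trees_up_to: "finite (trees_up_to n)"
  by (induction n) (auto simp: trees_up_to_0 trees_up_to_Suc)

lemma trees_up_to_mono: "m \<le> n \<Longrightarrow> trees_up_to m \<subseteq> trees_up_to n"
  by (auto simp: trees_up_to_def)

lemma finite_subset_trees_up_to: "finite F \<Longrightarrow> \<exists>n. F \<subseteq> trees_up_to n"
  by (rule exI[of _ "Max (asg_height ` F)"]) (auto simp: trees_up_to_def)

lemma sum_trees_up_to_Suc:
  "(\<Sum>t\<in>trees_up_to (Suc n). f t) = f Leaf + (\<Sum>t\<in>trees_up_to n. f (Mark t))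
     + (\<Sum>l\<in>trees_up_to n. \<Sum>t\<in>trees_up_to n. f (Bin l t))"
proof -
  let ?T = "trees_up_to n"
  have "Leaf \<notin> Mark ` ?T \<union> case_prod Bin ` (?T \<times> ?T)" "Mark ` ?T \<inter> case_prod Bin ` (?T \<times> ?T) = {}"
    by auto
  then have "(\<Sum>t\<in>trees_up_to (Suc n). f t) = f Leaf + (\<Sum>t\<in>Mark ` ?T. f t) + (\<Sum>t\<in>case_prod Bin ` (?T \<times> ?T). f t)"
    unfolding trees_up_to_Suc using finite_trees_up_to by (simp add: sum.union_disjoint add.assoc)
  also have "(\<Sum>t\<in>Mark ` ?T. f t) = (\<Sum>t\<in>?T. f (Mark t))"
    by (rule sum.reindex_cong[where l=Mark]) (auto simp: inj_on_def)
  also have "(\<Sum>t\<in>case_prod Bin ` (?T \<times> ?T). f t) = (\<Sum>(l, t)\<in>?T \<times> ?T. f (Bin l t))"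
    by (rule sum.reindex_cong[where l="case_prod Bin"]) (auto simp: inj_on_def)
  also have "\<dots> = (\<Sum>l\<in>?T. \<Sum>t\<in>?T. f (Bin l t))"
    by (rule sum.cartesian_product[symmetric])
  finally show ?thesis .
qed

lemma tendsto_sum_trees_up_to_infsum:
  fixes h :: "asg_tree \<Rightarrow> real"
  assumes nonneg: "\<And>t. 0 \<le> h t" and bounded: "\<And>n. sum h (trees_up_to n) \<le> K"
  shows "(\<lambda>n. sum h (trees_up_to n)) \<longlonglongrightarrow> infsum h UNIV"
proof -
  have "sum h F \<le> K" if finite: "finite F" for F
  proof -
    obtain n where "F \<subseteq> trees_up_to n"
      using finite_subset_trees_up_to[OF finite] by blast
    then have "sum h F \<le> sum h (trees_up_to n)"
      by (intro sum_mono2 finite_trees_up_to nonneg)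
    then show ?thesis
      using bounded[of n] by simp
  qed
  then have "h summable_on UNIV"
    by (intro nonneg_bdd_above_summable_on) (auto simp: nonneg bdd_above_def)
  then have "(sum h \<longlongrightarrow> infsum h UNIV) (finite_subsets_at_top UNIV)"
    using has_sum_infsum by (simp add: has_sum_def)
  moreover have "filterlim trees_up_to (finite_subsets_at_top UNIV) sequentially"
    unfolding filterlim_finite_subsets_at_top
  proof (intro allI impI)
    fix F :: "asg_tree set" assume "finite F \<and> F \<subseteq> UNIV"
    then obtain m where "F \<subseteq> trees_up_to m"
      using finite_subset_trees_up_to by blast
    then show "\<forall>\<^sub>F n in sequentially. finite (trees_up_to n) \<and> F \<subseteq> trees_up_to n \<and> trees_up_to n \<subseteq> UNIV"
      using trees_up_to_mono finite_trees_up_to by (blast intro: eventually_sequentiallyI[of m])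
  qed
  ultimately show ?thesis
    by (rule filterlim_compose)
qed

lemma continuous_on_exp_convolution:
  fixes \<phi> :: "real \<Rightarrow> real"
  assumes "continuous_on {0..} \<phi>"
  shows "continuous_on {0..} (\<lambda>r. integral {0..r} (\<lambda>\<tau>. K * exp (- c * \<tau>) * \<phi> (r - \<tau>)))"
proof -
  have "continuous_on {0..} (\<lambda>\<sigma>. exp (c * \<sigma>) * \<phi> \<sigma>)"
    by (intro continuous_intros assms)
  note integral = has_real_derivative_integral_atLeast[OF this]
  have "continuous_on {0..} (\<lambda>r. integral {0..r} (\<lambda>\<sigma>. exp (c * \<sigma>) * \<phi> \<sigma>))"
    by (rule DERIV_continuous_on) (auto intro: integral)
  then have "continuous_on {0..} (\<lambda>r. K * exp (- c * r) * integral {0..r} (\<lambda>\<sigma>. exp (c * \<sigma>) * \<phi> \<sigma>))"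
    by (intro continuous_intros)
  then show ?thesis
    by (rule continuous_on_cong[THEN iffD1, OF refl, rotated]) (rule integral_exp_convolution[OF assms, symmetric], simp)
qed

lemma exp_convolution_nonneg:
  fixes \<phi> :: "real \<Rightarrow> real"
  assumes "continuous_on {0..} \<phi>" "\<And>r. 0 \<le> r \<Longrightarrow> 0 \<le> \<phi> r" "0 \<le> K" "0 \<le> r"
  shows "0 \<le> integral {0..r} (\<lambda>\<tau>. K * exp (- c * \<tau>) * \<phi> (r - \<tau>))"
proof -
  have "continuous_on {0..r} \<phi>"
    by (rule continuous_on_subset[OF assms(1)]) auto
  then have "0 \<le> integral {0..r} (\<lambda>\<sigma>. exp (c * \<sigma>) * \<phi> \<sigma>)"
    by (intro integral_nonneg integrable_continuous_real continuous_intros) (auto intro!: mult_nonneg_nonneg assms(2))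
  then show ?thesis
    unfolding integral_exp_convolution[OF assms(1,4)] using assms(3) by simp
qed

lemma asg_prob_continuous: "continuous_on {0..} (asg_prob s u t)"
proof (induction t)
  case Leaf
  then show ?case
    by (auto intro!: continuous_intros)
next
  case (Mark t)
  have "asg_prob s u (Mark t) = (\<lambda>r. integral {0..r} (\<lambda>\<tau>. u * exp (- (s + u) * \<tau>) * asg_prob s u t (r - \<tau>)))"
    by (simp add: fun_eq_iff)
  then show ?case
    by (simp only: continuous_on_exp_convolution[OF Mark.IH])
next
  case (Bin l t)
  have eq: "asg_prob s u (Bin l t)
      = (\<lambda>r. integral {0..r} (\<lambda>\<tau>. s * exp (- (s + u) * \<tau>) * (asg_prob s u l (r - \<tau>) * asg_prob s u t (r - \<tau>))))"
    by (simp add: fun_eq_iff mult.assoc)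
  have "continuous_on {0..} (\<lambda>x. asg_prob s u l x * asg_prob s u t x)"
    by (intro continuous_intros Bin.IH)
  then show ?case
    unfolding eq by (rule continuous_on_exp_convolution)
qed

lemma asg_prob_Mark_eq:
  "0 \<le> r \<Longrightarrow> asg_prob s u (Mark t) r
     = u * exp (- (s + u) * r) * integral {0..r} (\<lambda>\<sigma>. exp ((s + u) * \<sigma>) * asg_prob s u t \<sigma>)"
  using integral_exp_convolution[OF asg_prob_continuous, of r u "s + u"] by simp

lemma asg_prob_Bin_eq:
  assumes "0 \<le> r"
  shows "asg_prob s u (Bin l t) r
     = s * exp (- (s + u) * r) * integral {0..r} (\<lambda>\<sigma>. exp ((s + u) * \<sigma>) * (asg_prob s u l \<sigma> * asg_prob s u t \<sigma>))"
proof -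
  have "continuous_on {0..} (\<lambda>x. asg_prob s u l x * asg_prob s u t x)"
    by (intro continuous_intros asg_prob_continuous)
  from integral_exp_convolution[OF this assms, of s "s + u"] show ?thesis
    by (simp add: mult.assoc)
qed

lemma sum_trees_up_to_Suc_asg_prob:
  assumes "0 \<le> r"
  shows "(\<Sum>t\<in>trees_up_to (Suc n). asg_prob s u t r * w t)
     = exp (- (s + u) * r) * (w Leaf + integral {0..r} (\<lambda>\<sigma>. exp ((s + u) * \<sigma>) *
         (u * (\<Sum>t\<in>trees_up_to n. asg_prob s u t \<sigma> * w (Mark t))
          + s * (\<Sum>l\<in>trees_up_to n. \<Sum>t\<in>trees_up_to n. asg_prob s u l \<sigma> * asg_prob s u t \<sigma> * w (Bin l t)))))"
proof -
  let ?T = "trees_up_to n" and ?E = "\<lambda>\<sigma>. exp ((s + u) * \<sigma>)"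
  define I1 where "I1 t = integral {0..r} (\<lambda>\<sigma>. ?E \<sigma> * asg_prob s u t \<sigma>)" for t
  define I2 where "I2 l t = integral {0..r} (\<lambda>\<sigma>. ?E \<sigma> * (asg_prob s u l \<sigma> * asg_prob s u t \<sigma>))" for l t
  have "continuous_on {0..r} (asg_prob s u t)" for t
    by (rule continuous_on_subset[OF asg_prob_continuous]) auto
  then have "((\<lambda>\<sigma>. ?E \<sigma> * asg_prob s u t \<sigma>) has_integral I1 t) {0..r}"
    and "((\<lambda>\<sigma>. ?E \<sigma> * (asg_prob s u l \<sigma> * asg_prob s u t \<sigma>)) has_integral I2 l t) {0..r}" for l t
    unfolding I1_def I2_def by (intro integrable_integral integrable_continuous_real continuous_intros; blast)+
  then have "((\<lambda>\<sigma>. (\<Sum>t\<in>?T. (u * w (Mark t)) * (?E \<sigma> * asg_prob s u t \<sigma>))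
        + (\<Sum>l\<in>?T. \<Sum>t\<in>?T. (s * w (Bin l t)) * (?E \<sigma> * (asg_prob s u l \<sigma> * asg_prob s u t \<sigma>))))
      has_integral (\<Sum>t\<in>?T. (u * w (Mark t)) * I1 t) + (\<Sum>l\<in>?T. \<Sum>t\<in>?T. (s * w (Bin l t)) * I2 l t)) {0..r}"
    by (intro has_integral_add has_integral_sum finite_trees_up_to has_integral_mult_right)
  moreover have "(\<lambda>\<sigma>. (\<Sum>t\<in>?T. (u * w (Mark t)) * (?E \<sigma> * asg_prob s u t \<sigma>))
        + (\<Sum>l\<in>?T. \<Sum>t\<in>?T. (s * w (Bin l t)) * (?E \<sigma> * (asg_prob s u l \<sigma> * asg_prob s u t \<sigma>))))
      = (\<lambda>\<sigma>. ?E \<sigma> * (u * (\<Sum>t\<in>?T. asg_prob s u t \<sigma> * w (Mark t))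
          + s * (\<Sum>l\<in>?T. \<Sum>t\<in>?T. asg_prob s u l \<sigma> * asg_prob s u t \<sigma> * w (Bin l t))))"
    by (simp add: fun_eq_iff sum_distrib_left distrib_left mult_ac)
  ultimately have integral: "integral {0..r} (\<lambda>\<sigma>. ?E \<sigma> * (u * (\<Sum>t\<in>?T. asg_prob s u t \<sigma> * w (Mark t))
          + s * (\<Sum>l\<in>?T. \<Sum>t\<in>?T. asg_prob s u l \<sigma> * asg_prob s u t \<sigma> * w (Bin l t))))
      = (\<Sum>t\<in>?T. (u * w (Mark t)) * I1 t) + (\<Sum>l\<in>?T. \<Sum>t\<in>?T. (s * w (Bin l t)) * I2 l t)"
    by (simp add: integral_unique)
  have "asg_prob s u (Mark t) r = u * exp (- (s + u) * r) * I1 t"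
    and "asg_prob s u (Bin l t) r = s * exp (- (s + u) * r) * I2 l t" for l t
    unfolding I1_def I2_def using assms by (rule asg_prob_Mark_eq, rule asg_prob_Bin_eq)
  then have "(\<Sum>t\<in>trees_up_to (Suc n). asg_prob s u t r * w t)
      = exp (- (s + u) * r) * w Leaf + (\<Sum>t\<in>?T. u * exp (- (s + u) * r) * I1 t * w (Mark t))
        + (\<Sum>l\<in>?T. \<Sum>t\<in>?T. s * exp (- (s + u) * r) * I2 l t * w (Bin l t))"
    by (simp only: sum_trees_up_to_Suc asg_prob.simps(1))
  then show ?thesis
    unfolding integral by (simp add: sum_distrib_left algebra_simps)
qed

locale asg_rates =
  fixes s u :: real
  assumes s_nonneg: "0 \<le> s" and u_nonneg: "0 \<le> u"
begin

lemma asg_prob_nonneg: "0 \<le> r \<Longrightarrow> 0 \<le> asg_prob s u t r"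
proof (induction t arbitrary: r)
  case Leaf
  then show ?case by simp
next
  case (Mark t)
  show ?case
    unfolding asg_prob.simps by (rule exp_convolution_nonneg[OF asg_prob_continuous Mark.IH u_nonneg Mark.prems])
next
  case (Bin l t)
  have "continuous_on {0..} (\<lambda>x. asg_prob s u l x * asg_prob s u t x)"
    by (intro continuous_intros asg_prob_continuous)
  moreover have "0 \<le> asg_prob s u l x * asg_prob s u t x" if "0 \<le> x" for x
    using Bin.IH that by simp
  ultimately have "0 \<le> integral {0..r}
      (\<lambda>\<tau>. s * exp (- (s + u) * \<tau>) * (asg_prob s u l (r - \<tau>) * asg_prob s u t (r - \<tau>)))"
    using exp_convolution_nonneg s_nonneg Bin.prems by blast
  then show ?case
    by (simp only: asg_prob.simps mult.assoc)
qed

lemma sum_asg_prob_le_1: "0 \<le> r \<Longrightarrow> (\<Sum>t\<in>trees_up_to n. asg_prob s u t r) \<le> 1"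
proof (induction n arbitrary: r)
  case 0
  then show ?case
    using s_nonneg u_nonneg by (simp add: trees_up_to_0 mult_nonpos_nonneg)
next
  case (Suc n)
  let ?m = "\<lambda>\<sigma>. \<Sum>t\<in>trees_up_to n. asg_prob s u t \<sigma>"
  have "(\<Sum>t\<in>trees_up_to (Suc n). asg_prob s u t r)
      = exp (- (s + u) * r) * (1 + integral {0..r} (\<lambda>\<sigma>. exp ((s + u) * \<sigma>) * (u * ?m \<sigma> + s * (?m \<sigma> * ?m \<sigma>))))"
    using sum_trees_up_to_Suc_asg_prob[OF Suc.prems, where w="\<lambda>_. 1"] by (simp add: sum_product)
  also have "\<dots> \<le> exp (- (s + u) * r) * (1 + integral {0..r} (\<lambda>\<sigma>. (s + u) * exp ((s + u) * \<sigma>)))"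
  proof (intro mult_left_mono add_left_mono integral_le)
    fix \<sigma> assume "\<sigma> \<in> {0..r}"
    then have "0 \<le> ?m \<sigma>" "?m \<sigma> \<le> 1"
      using Suc.IH by (auto intro: sum_nonneg asg_prob_nonneg)
    then have "u * ?m \<sigma> \<le> u" "s * (?m \<sigma> * ?m \<sigma>) \<le> s"
      using s_nonneg u_nonneg by (simp_all add: mult_left_le mult_le_one)
    then have "u * ?m \<sigma> + s * (?m \<sigma> * ?m \<sigma>) \<le> s + u"
      by linarith
    then show "exp ((s + u) * \<sigma>) * (u * ?m \<sigma> + s * (?m \<sigma> * ?m \<sigma>)) \<le> (s + u) * exp ((s + u) * \<sigma>)"
      by (simp add: mult.commute)
  qed (auto intro!: integrable_continuous_real continuous_intros continuous_on_subset[OF asg_prob_continuous])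
  also have "\<dots> = 1"
    unfolding integral_exp_derivative[OF Suc.prems] by (simp add: mult_exp_exp algebra_simps)
  finally show ?case .
qed

section \<open>Weighted sums over the ancestral selection graph\<close>

definition weighted_sum :: "(asg_tree \<Rightarrow> real) \<Rightarrow> real \<Rightarrow> real" where
  "weighted_sum w r = (\<Sum>\<^sub>\<infinity>t. asg_prob s u t r * w t)"

definition partial_weighted_sum :: "nat \<Rightarrow> (asg_tree \<Rightarrow> real) \<Rightarrow> real \<Rightarrow> real" where
  "partial_weighted_sum n w r = (\<Sum>t\<in>trees_up_to n. asg_prob s u t r * w t)"

context
  fixes w :: "asg_tree \<Rightarrow> real" and r :: real
  assumes w: "\<And>t. w t \<in> {0..1}" and r: "0 \<le> r"
begin

lemma partial_weighted_sum_nonneg: "0 \<le> partial_weighted_sum n w r"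
  unfolding partial_weighted_sum_def using w by (intro sum_nonneg mult_nonneg_nonneg asg_prob_nonneg r) auto

lemma partial_weighted_sum_le_Suc: "partial_weighted_sum n w r \<le> partial_weighted_sum (Suc n) w r"
  unfolding partial_weighted_sum_def using w
  by (intro sum_mono2 finite_trees_up_to trees_up_to_mono mult_nonneg_nonneg asg_prob_nonneg r) auto

lemma partial_weighted_sum_le_1: "partial_weighted_sum n w r \<le> 1"
proof -
  have "partial_weighted_sum n w r \<le> (\<Sum>t\<in>trees_up_to n. asg_prob s u t r)"
    unfolding partial_weighted_sum_def using w
    by (intro sum_mono mult_right_le_one_le asg_prob_nonneg r) auto
  also have "\<dots> \<le> 1"
    by (rule sum_asg_prob_le_1[OF r])
  finally show ?thesis .
qed

lemma partial_weighted_sum_LIMSEQ: "(\<lambda>n. partial_weighted_sum n w r) \<longlonglongrightarrow> weighted_sum w r"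
  unfolding partial_weighted_sum_def weighted_sum_def
  using w partial_weighted_sum_le_1
  by (intro tendsto_sum_trees_up_to_infsum[where K=1])
     (auto intro!: mult_nonneg_nonneg asg_prob_nonneg r simp: partial_weighted_sum_def)

end

context
  fixes w w1 w2 w3 :: "asg_tree \<Rightarrow> real"
  assumes weights: "\<And>t. w t \<in> {0..1}" "\<And>t. w1 t \<in> {0..1}" "\<And>t. w2 t \<in> {0..1}" "\<And>t. w3 t \<in> {0..1}"
    and w_Mark: "\<And>t. w (Mark t) = w1 t" and w_Bin: "\<And>l t. w (Bin l t) = w2 l * w3 t"
begin

text \<open>The first-jump decomposition, summed over the trees of height at most \<open>n + 1\<close>, in the limit
  \<open>n \<rightarrow> \<infinity>\<close>.\<close>
lemma weighted_sum_integral_equation: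
  assumes r: "0 \<le> r"
  defines "H \<equiv> \<lambda>\<sigma>. u * weighted_sum w1 \<sigma> + s * (weighted_sum w2 \<sigma> * weighted_sum w3 \<sigma>)"
  shows "(\<lambda>\<sigma>. exp ((s + u) * \<sigma>) * H \<sigma>) integrable_on {0..r}"
    and "weighted_sum w r = exp (- (s + u) * r) * (w Leaf + integral {0..r} (\<lambda>\<sigma>. exp ((s + u) * \<sigma>) * H \<sigma>))"
proof -
  define F where "F n \<sigma> = exp ((s + u) * \<sigma>) *
    (u * partial_weighted_sum n w1 \<sigma> + s * (partial_weighted_sum n w2 \<sigma> * partial_weighted_sum n w3 \<sigma>))" for n \<sigma>
  have step: "partial_weighted_sum (Suc n) w r = exp (- (s + u) * r) * (w Leaf + integral {0..r} (F n))" for n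
  proof -
    have "(\<lambda>\<sigma>. exp ((s + u) * \<sigma>) * (u * (\<Sum>t\<in>trees_up_to n. asg_prob s u t \<sigma> * w (Mark t))
        + s * (\<Sum>l\<in>trees_up_to n. \<Sum>t\<in>trees_up_to n. asg_prob s u l \<sigma> * asg_prob s u t \<sigma> * w (Bin l t)))) = F n"
      by (simp add: fun_eq_iff F_def partial_weighted_sum_def w_Mark w_Bin sum_product mult_ac)
    then show ?thesis
      unfolding partial_weighted_sum_def sum_trees_up_to_Suc_asg_prob[OF r] by simp
  qed
  have integrable: "F n integrable_on {0..r}" for n
    unfolding F_def partial_weighted_sum_def
    by (intro integrable_continuous_real continuous_intros continuous_on_subset[OF asg_prob_continuous]) auto
  have mono: "F n \<sigma> \<le> F (Suc n) \<sigma>" if "\<sigma> \<in> {0..r}" for n \<sigma>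
    unfolding F_def using that s_nonneg u_nonneg weights
    by (intro mult_left_mono add_mono mult_mono partial_weighted_sum_le_Suc partial_weighted_sum_nonneg) auto
  have lim_F: "(\<lambda>n. F n \<sigma>) \<longlonglongrightarrow> exp ((s + u) * \<sigma>) * H \<sigma>" if "\<sigma> \<in> {0..r}" for \<sigma>
    unfolding F_def H_def using that weights by (intro tendsto_intros partial_weighted_sum_LIMSEQ) auto
  have "(\<lambda>n. partial_weighted_sum n w r) \<longlonglongrightarrow> weighted_sum w r"
    using weights r by (intro partial_weighted_sum_LIMSEQ)
  note limit = monotone_convergence_integral_equation[OF step integrable mono lim_F this]
  show "(\<lambda>\<sigma>. exp ((s + u) * \<sigma>) * H \<sigma>) integrable_on {0..r}"
    by (rule limit(1))
  show "weighted_sum w r = exp (- (s + u) * r) * (w Leaf + integral {0..r} (\<lambda>\<sigma>. exp ((s + u) * \<sigma>) * H \<sigma>))"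
    by (rule limit(2))
qed

lemma weighted_sum_at_0: "weighted_sum w 0 = w Leaf"
  using weighted_sum_integral_equation(2)[of 0] by simp

lemma weighted_sum_continuous: "continuous_on {0..} (weighted_sum w)"
  using weighted_sum_integral_equation by (rule continuous_on_integral_equation)

lemma weighted_sum_has_real_derivative:
  assumes "continuous_on {0..} (weighted_sum w1)" "continuous_on {0..} (weighted_sum w2)"
    "continuous_on {0..} (weighted_sum w3)" and "0 \<le> r"
  shows "(weighted_sum w has_real_derivative
           - (s + u) * weighted_sum w r + (u * weighted_sum w1 r + s * (weighted_sum w2 r * weighted_sum w3 r)))
         (at r within {0..})"
  by (rule has_real_derivative_integral_equation[OF weighted_sum_integral_equation(2)])
     (auto intro!: continuous_intros assms)

end

lemma total_mass_continuous: "continuous_on {0..} (weighted_sum (\<lambda>_. 1))"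
  by (rule weighted_sum_continuous[where ?w1.0="\<lambda>_. 1" and ?w2.0="\<lambda>_. 1" and ?w3.0="\<lambda>_. 1"]) auto

text \<open>No explosion: the total mass \<open>M\<close> solves \<open>M' = s M (M - 1)\<close> with \<open>M 0 = 1\<close>.\<close>
lemma total_mass_eq_1:
  assumes "0 \<le> r"
  shows "weighted_sum (\<lambda>_. 1) r = 1"
proof -
  let ?M = "weighted_sum (\<lambda>_. 1)"
  have deriv: "((\<lambda>t. 1 - ?M t) has_real_derivative s * ?M t * (1 - ?M t)) (at t within {0..})" if "0 \<le> t" for t
  proof -
    have "(?M has_real_derivative - (s + u) * ?M t + (u * ?M t + s * (?M t * ?M t))) (at t within {0..})"
      by (rule weighted_sum_has_real_derivative) (use total_mass_continuous that in auto)
    then show ?thesis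
      by (auto intro!: derivative_eq_intros simp: algebra_simps)
  qed
  have "continuous_on {0..} (\<lambda>t. s * ?M t)"
    using total_mass_continuous by (intro continuous_intros)
  from linear_ode_solution[OF this deriv assms]
  have "1 - ?M r = (1 - ?M 0) * exp (integral {0..r} (\<lambda>t. s * ?M t))" .
  moreover have "?M 0 = 1"
    by (rule weighted_sum_at_0[where ?w1.0="\<lambda>_. 1" and ?w2.0="\<lambda>_. 1" and ?w3.0="\<lambda>_. 1"]) auto
  ultimately show ?thesis
    by simp
qed

context
  fixes y0 :: real
  assumes y0: "y0 \<in> {0..1}"
begin

lemma root_type_sum_continuous: "continuous_on {0..} (weighted_sum (root_type_prob y0))"
  by (rule weighted_sum_continuous[where ?w1.0="\<lambda>_. 1" and ?w2.0="root_type_prob y0" and ?w3.0="root_type_prob y0"])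
     (simp_all add: root_type_prob_bounds root_type_prob_Mark root_type_prob_Bin)

lemma root_type_sum_at_0: "weighted_sum (root_type_prob y0) 0 = y0"
  using weighted_sum_at_0[where w="root_type_prob y0" and ?w1.0="\<lambda>_. 1" and ?w2.0="root_type_prob y0" and ?w3.0="root_type_prob y0"]
  by (simp add: root_type_prob_bounds root_type_prob_Mark root_type_prob_Bin root_type_prob_Leaf[OF y0])

lemma root_type_sum_solves_ode: "asg_ode_solution s u (weighted_sum (root_type_prob y0))"
  unfolding asg_ode_solution_def
proof (intro allI impI)
  let ?B = "weighted_sum (root_type_prob y0)" and ?M = "weighted_sum (\<lambda>_. 1)"
  fix t :: real assume "0 \<le> t"
  have "(?B has_real_derivative - (s + u) * ?B t + (u * ?M t + s * (?B t * ?B t))) (at t within {0..})"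
    by (rule weighted_sum_has_real_derivative)
       (use \<open>0 \<le> t\<close> total_mass_continuous root_type_sum_continuous in
        \<open>simp_all add: root_type_prob_bounds root_type_prob_Mark root_type_prob_Bin\<close>)
  then show "(?B has_real_derivative - s * ?B t * (1 - ?B t) + u * (1 - ?B t)) (at t within {0..})"
    by (rule DERIV_cong) (simp add: total_mass_eq_1[OF \<open>0 \<le> t\<close>] algebra_simps)
qed

lemma anc_type_sum_eq:
  assumes "0 \<le> r"
  shows "weighted_sum (anc_type_prob y0) r = y0 * exp (- s * integral {0..r} (\<lambda>\<xi>. 1 - weighted_sum (root_type_prob y0) \<xi>))"
proof -
  let ?A = "weighted_sum (anc_type_prob y0)" and ?B = "weighted_sum (root_type_prob y0)"
  note weights = anc_type_prob_bounds root_type_prob_bounds anc_type_prob_Mark anc_type_prob_Bin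
  have continuous: "continuous_on {0..} ?A"
    by (rule weighted_sum_continuous[where ?w1.0="anc_type_prob y0" and ?w2.0="anc_type_prob y0" and ?w3.0="root_type_prob y0"])
       (simp_all add: weights)
  have "(?A has_real_derivative - s * (1 - ?B t) * ?A t) (at t within {0..})" if "0 \<le> t" for t
  proof -
    have "(?A has_real_derivative - (s + u) * ?A t + (u * ?A t + s * (?A t * ?B t))) (at t within {0..})"
      by (rule weighted_sum_has_real_derivative) (use that continuous root_type_sum_continuous in \<open>simp_all add: weights\<close>)
    then show ?thesis
      by (rule DERIV_cong) (simp add: algebra_simps)
  qed
  moreover have "continuous_on {0..} (\<lambda>t. - s * (1 - ?B t))"
    using root_type_sum_continuous by (intro continuous_intros)
  moreover have "?A 0 = y0"
    using weighted_sum_at_0[where w="anc_type_prob y0" and ?w1.0="anc_type_prob y0" and ?w2.0="anc_type_prob y0" and ?w3.0="root_type_prob y0"]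
    by (simp add: weights anc_type_prob_Leaf[OF y0])
  ultimately show ?thesis
    using linear_ode_solution[OF _ _ assms, of "\<lambda>t. - s * (1 - ?B t)" ?A] by simp
qed

lemma g_eq_weighted_sum: "g s u r y0 = weighted_sum (anc_type_prob y0) r"
  by (simp add: g_def weighted_sum_def)

lemma g_eq_exp_integral:
  assumes y: "asg_ode_solution s u y" "y 0 = y0" and "0 \<le> r"
  shows "g s u r y0 = y0 * exp (- s * integral {0..r} (\<lambda>\<xi>. 1 - y \<xi>))"
proof -
  have "y \<xi> = weighted_sum (root_type_prob y0) \<xi>" if "\<xi> \<in> {0..r}" for \<xi>
    using asg_ode_solution_unique[OF y(1) root_type_sum_solves_ode] that
    by (simp add: y(2) root_type_sum_at_0)
  then have "integral {0..r} (\<lambda>\<xi>. 1 - y \<xi>) = integral {0..r} (\<lambda>\<xi>. 1 - weighted_sum (root_type_prob y0) \<xi>)"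
    by (intro integral_cong) simp
  then show ?thesis
    by (simp add: g_eq_weighted_sum anc_type_sum_eq[OF \<open>0 \<le> r\<close>])
qed

lemma g_eq_reciprocal:
  assumes "0 \<le> r"
  shows "g s u r y0 = y0 / (1 + s * (1 - y0) * integral {0..r} (\<lambda>\<sigma>. exp ((s - u) * \<sigma>)))"
proof -
  note B = root_type_sum_solves_ode root_type_sum_at_0
  have "g s u r y0 = y0 / exp (s * integral {0..r} (\<lambda>\<xi>. 1 - weighted_sum (root_type_prob y0) \<xi>))"
    using g_eq_exp_integral[OF B assms] by (simp add: exp_minus field_simps)
  then show ?thesis
    using asg_ode_exp_integral[OF B(1) assms] by (simp add: B(2))
qed

lemma g_eq_y0: "s = 0 \<or> y0 = 1 \<Longrightarrow> 0 \<le> r \<Longrightarrow> g s u r y0 = y0"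
  using g_eq_reciprocal by auto

lemma g_eq_ratio:
  assumes y: "asg_ode_solution s u y" "y 0 = y0" and "0 \<le> r" "s * y0 \<noteq> u"
  shows "g s u r y0 = y0 * (u - s * y r) / (u - s * y0)"
  using g_eq_exp_integral[OF y \<open>0 \<le> r\<close>] asg_ode_u_minus_s_y[OF y(1) \<open>0 \<le> r\<close>] y(2) assms(4) by simp

lemma g_eq_exp_at_equilibrium:
  assumes y: "asg_ode_solution s u y" "y 0 = y0" and "0 \<le> r" "y0 = 1 \<or> s * y0 = u"
  shows "g s u r y0 = y0 * exp (- r * s * (1 - y0))"
proof (cases "s = 0 \<or> y0 = 1")
  case True
  then show ?thesis
    using g_eq_y0[OF _ \<open>0 \<le> r\<close>] by auto
next
  case False
  with assms(4) have "s \<noteq> 0" "s * y0 = u"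
    by auto
  have "y \<xi> = y0" if "\<xi> \<in> {0..r}" for \<xi>
  proof -
    have "u - s * y \<xi> = 0"
      using asg_ode_u_minus_s_y[OF y(1), of \<xi>] that y(2) \<open>s * y0 = u\<close> by simp
    then show ?thesis
      using \<open>s \<noteq> 0\<close> \<open>s * y0 = u\<close> by simp
  qed
  then have "integral {0..r} (\<lambda>\<xi>. 1 - y \<xi>) = integral {0..r} (\<lambda>\<xi>. 1 - y0)"
    by (intro integral_cong) simp
  then show ?thesis
    using g_eq_exp_integral[OF y \<open>0 \<le> r\<close>] \<open>0 \<le> r\<close> by (simp add: mult_ac)
qed

lemma g_closed_forms:
  assumes "y 0 = y0" "asg_ode_solution s u y" "0 \<le> r"
  shows "g s u r y0 = y0 * exp (- s * integral {0..r} (\<lambda>\<xi>. 1 - y \<xi>)) \<and>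
     (y0 \<in> {0..<1} \<and> s * y0 \<noteq> u \<longrightarrow> g s u r y0 = y0 * (u - s * y r) / (u - s * y0)) \<and>
     ((y0 = 1 \<or> s * y0 = u) \<longrightarrow> g s u r y0 = y0 * exp (- r * s * (1 - y0)))"
proof (intro conjI impI)
  show "g s u r y0 = y0 * exp (- s * integral {0..r} (\<lambda>\<xi>. 1 - y \<xi>))"
    by (rule g_eq_exp_integral[OF assms(2,1,3)])
  show "g s u r y0 = y0 * (u - s * y r) / (u - s * y0)" if "y0 \<in> {0..<1} \<and> s * y0 \<noteq> u"
    using that by (intro g_eq_ratio[OF assms(2,1,3)]) simp
  show "g s u r y0 = y0 * exp (- r * s * (1 - y0))" if "y0 = 1 \<or> s * y0 = u"
    by (rule g_eq_exp_at_equilibrium[OF assms(2,1,3) that])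
qed

lemma g_tendsto_y0:
  assumes "s = 0 \<or> y0 = 1"
  shows "((\<lambda>r. g s u r y0) \<longlongrightarrow> y0) at_top"
proof (rule tendsto_eventually)
  show "\<forall>\<^sub>F r in at_top. g s u r y0 = y0"
    using eventually_ge_at_top[of 0] by eventually_elim (rule g_eq_y0[OF assms])
qed

lemma g_tendsto_0_if_u_le_s:
  assumes "u \<le> s" "0 < s" "y0 < 1"
  shows "((\<lambda>r. g s u r y0) \<longlongrightarrow> 0) at_top"
proof -
  define K where "K = s * (1 - y0)"
  let ?D = "\<lambda>r. 1 + K * integral {0..r} (\<lambda>\<sigma>. exp ((s - u) * \<sigma>))"
  have "0 < K"
    using assms by (simp add: K_def)
  then have "filterlim (\<lambda>r. 1 + K * r) at_top at_top"
    by (intro filterlim_tendsto_add_at_top[OF tendsto_const] filterlim_tendsto_pos_mult_at_top[OF tendsto_const _ filterlim_ident])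
  moreover have "\<forall>\<^sub>F r in at_top. 1 + K * r \<le> ?D r"
    using eventually_ge_at_top[of 0]
    by eventually_elim (use \<open>0 < K\<close> assms(1) in \<open>simp add: integral_exp_ge\<close>)
  ultimately have "filterlim ?D at_top at_top"
    by (rule filterlim_at_top_mono)
  then have "((\<lambda>r. y0 / ?D r) \<longlongrightarrow> 0) at_top"
    by (intro tendsto_divide_0[OF tendsto_const] filterlim_at_top_imp_at_infinity)
  moreover have "\<forall>\<^sub>F r in at_top. y0 / ?D r = g s u r y0"
    using eventually_ge_at_top[of 0] by eventually_elim (simp add: g_eq_reciprocal K_def)
  ultimately show ?thesis
    by (rule tendsto_cong[THEN iffD1, rotated])
qed

lemma g_tendsto_u_gt_s:
  assumes "s < u"
  shows "((\<lambda>r. g s u r y0) \<longlongrightarrow> y0 * (u - s) / (u - s * y0)) at_top"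
proof -
  let ?D = "\<lambda>r. 1 + s * (1 - y0) * integral {0..r} (\<lambda>\<sigma>. exp ((s - u) * \<sigma>))"
  have "s * y0 \<le> s"
    using y0 s_nonneg by (simp add: mult_left_le)
  then have "u - s * y0 \<noteq> 0"
    using assms by simp
  have "((\<lambda>r. integral {0..r} (\<lambda>\<sigma>. exp ((s - u) * \<sigma>))) \<longlongrightarrow> - 1 / (s - u)) at_top"
    using assms by (intro integral_exp_tendsto) simp
  then have "((\<lambda>r. y0 / ?D r) \<longlongrightarrow> y0 / (1 + s * (1 - y0) * (- 1 / (s - u)))) at_top"
    using assms \<open>u - s * y0 \<noteq> 0\<close> by (intro tendsto_intros) (auto simp: field_simps)
  moreover have "y0 / (1 + s * (1 - y0) * (- 1 / (s - u))) = y0 * (u - s) / (u - s * y0)"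
    using assms \<open>u - s * y0 \<noteq> 0\<close> by (simp add: field_simps)
  ultimately have "((\<lambda>r. y0 / ?D r) \<longlongrightarrow> y0 * (u - s) / (u - s * y0)) at_top"
    by simp
  moreover have "\<forall>\<^sub>F r in at_top. y0 / ?D r = g s u r y0"
    using eventually_ge_at_top[of 0] by eventually_elim (simp add: g_eq_reciprocal)
  ultimately show ?thesis
    by (rule tendsto_cong[THEN iffD1, rotated])
qed

lemma g_convergent: "\<exists>L. ((\<lambda>r. g s u r y0) \<longlongrightarrow> L) at_top"
proof -
  consider "s = 0 \<or> y0 = 1" | "u \<le> s" "0 < s" "y0 < 1" | "s < u"
    using y0 s_nonneg by fastforce
  then show ?thesis
  proof cases
    case 1
    then show ?thesis
      using g_tendsto_y0 by blast
  next
    case 2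
    then show ?thesis
      using g_tendsto_0_if_u_le_s by blast
  next
    case 3
    then show ?thesis
      using g_tendsto_u_gt_s by blast
  qed
qed

end

end

theorem proposition7p1:
  fixes s u :: real
  assumes "s \<ge> 0" and "u > 0"
  shows "(\<forall>y0 y r. y0 \<in> {0..1} \<and> y 0 = y0 \<and>
            (\<forall>t\<ge>0. (y has_real_derivative (- s * y t * (1 - y t) + u * (1 - y t))) (at t within {0..}))
            \<and> r \<ge> 0 \<longrightarrow>
            g s u r y0 = y0 * exp (- s * integral {0..r} (\<lambda>\<xi>. 1 - y \<xi>)) \<and>
            (y0 \<in> {0..<1} \<and> s * y0 \<noteq> u \<longrightarrow> g s u r y0 = y0 * (u - s * y r) / (u - s * y0)) \<and>
            ((y0 = 1 \<or> s * y0 = u) \<longrightarrow> g s u r y0 = y0 * exp (- r * s * (1 - y0))))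
       \<and> (\<forall>y0\<in>{0..1}. \<exists>L. ((\<lambda>r. g s u r y0) \<longlongrightarrow> L) at_top)
       \<and> (s = 0 \<longrightarrow> (\<forall>y0\<in>{0..1}. ((\<lambda>r. g s u r y0) \<longlongrightarrow> y0) at_top))
       \<and> (u \<le> s \<longrightarrow> (\<forall>y0\<in>{0..<1}. ((\<lambda>r. g s u r y0) \<longlongrightarrow> 0) at_top)
                    \<and> ((\<lambda>r. g s u r 1) \<longlongrightarrow> 1) at_top)
       \<and> (u > s \<longrightarrow> (\<forall>y0\<in>{0..1}. ((\<lambda>r. g s u r y0) \<longlongrightarrow> y0 * (u - s) / (u - s * y0)) at_top))"
proof -
  interpret asg_rates s u
    using assms by unfold_locales auto
  have closed_forms: "\<forall>y0 y r. y0 \<in> {0..1} \<and> y 0 = y0 \<and> asg_ode_solution s u y \<and> r \<ge> 0 \<longrightarrow>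
     g s u r y0 = y0 * exp (- s * integral {0..r} (\<lambda>\<xi>. 1 - y \<xi>)) \<and>
     (y0 \<in> {0..<1} \<and> s * y0 \<noteq> u \<longrightarrow> g s u r y0 = y0 * (u - s * y r) / (u - s * y0)) \<and>
     ((y0 = 1 \<or> s * y0 = u) \<longrightarrow> g s u r y0 = y0 * exp (- r * s * (1 - y0)))"
    by (intro allI impI, elim conjE, rule g_closed_forms)
  have limit_s0: "s = 0 \<longrightarrow> (\<forall>y0\<in>{0..1}. ((\<lambda>r. g s u r y0) \<longlongrightarrow> y0) at_top)"
    using g_tendsto_y0 by blast
  have limit_u_le_s: "u \<le> s \<longrightarrow> (\<forall>y0\<in>{0..<1}. ((\<lambda>r. g s u r y0) \<longlongrightarrow> 0) at_top)
      \<and> ((\<lambda>r. g s u r 1) \<longlongrightarrow> 1) at_top"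
    using g_tendsto_0_if_u_le_s g_tendsto_y0[of 1] assms by simp
  have limit_u_gt_s: "u > s \<longrightarrow> (\<forall>y0\<in>{0..1}. ((\<lambda>r. g s u r y0) \<longlongrightarrow> y0 * (u - s) / (u - s * y0)) at_top)"
    using g_tendsto_u_gt_s by simp
  have limit_exists: "\<forall>y0\<in>{0..1}. \<exists>L. ((\<lambda>r. g s u r y0) \<longlongrightarrow> L) at_top"
    using g_convergent by blast
  show ?thesis
    unfolding asg_ode_solution_def[symmetric]
    by (intro conjI closed_forms limit_exists limit_s0 limit_u_le_s limit_u_gt_s)
qed

end
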